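(* If a graph $G$ admits a star NeS model, then it admits a star NeS model $(\mathcal{T},(T_v)_{v\in V(G)})$ such that, with $c$ the center of the star $\mathcal{T}$, the set $\{v\in V(G): c\in T_v\}$ is a maximal clique of $G$.
   Context: An embedding tree $\mathcal{T}$ is a tree embedded in the Euclidean plane: each edge is a straight line segment of positive length, segments meet only at common endpoints, and $\mathcal{T}$ is regarded as the set of all points on its segments; $d_{\mathcal{T}}(x,y)$ is the length of the unique path in $\mathcal{T}$ between points $x,y$. A neighborhood subtree of $\mathcal{T}$ with center $c\in\mathcal{T}$ and non-negative rational radius $w$ is $\{p\in\mathcal{T}: d_{\mathcal{T}}(p,c)\le w\}$. A NeS model of a graph $G$ is a pair $(\mathcal{T},(T_v)_{v\in V(G)})$ where each $T_v$ is a neighborhood subtree of $\mathcal{T}$ and for all distinct $u,v$, $uv\in E(G)$ iff $T_u\cap T_v\neq\emptyset$. A star NeS model is a NeS model in which $\mathcal{T}$ is (the embedding of) a star, i.e. a union of line segments $L_1,\dots,L_\beta$ sharing one common endpoint $c$ (the center) and otherwise disjoint. *)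

theory Defs
  imports "HOL-Analysis.Analysis"
begin

definition simple_graph :: "'v set \<Rightarrow> ('v \<Rightarrow> 'v \<Rightarrow> bool) \<Rightarrow> bool" where
  "simple_graph V E \<longleftrightarrow> finite V \<and> (\<forall>u v. E u v \<longrightarrow> u \<in> V \<and> v \<in> V)
     \<and> (\<forall>u v. E u v \<longrightarrow> E v u) \<and> (\<forall>v. \<not> E v v)"

definition is_clique :: "'v set \<Rightarrow> ('v \<Rightarrow> 'v \<Rightarrow> bool) \<Rightarrow> 'v set \<Rightarrow> bool" where
  "is_clique V E K \<longleftrightarrow> K \<subseteq> V \<and> (\<forall>u\<in>K. \<forall>v\<in>K. u \<noteq> v \<longrightarrow> E u v)"

definition is_maximal_clique :: "'v set \<Rightarrow> ('v \<Rightarrow> 'v \<Rightarrow> bool) \<Rightarrow> 'v set \<Rightarrow> bool" where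
  "is_maximal_clique V E K \<longleftrightarrow> is_clique V E K \<and> (\<forall>K'. is_clique V E K' \<and> K \<subseteq> K' \<longrightarrow> K' = K)"

text \<open>Embedded star in the plane (plane = complex): center c, finite nonempty set P of
  leaf endpoints; segments [c,p] have positive length and pairwise meet only in c.\<close>
definition is_star :: "complex \<Rightarrow> complex set \<Rightarrow> bool" where
  "is_star c P \<longleftrightarrow> finite P \<and> P \<noteq> {} \<and> c \<notin> P \<and>
     (\<forall>p\<in>P. \<forall>q\<in>P. p \<noteq> q \<longrightarrow> closed_segment c p \<inter> closed_segment c q = {c})"

definition star_set :: "complex \<Rightarrow> complex set \<Rightarrow> complex set" where
  "star_set c P = (\<Union>p\<in>P. closed_segment c p)"

text \<open>Length of the unique path in the star between two of its points: along a common
  segment if both lie on one, otherwise through the center.\<close>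
definition star_dist :: "complex \<Rightarrow> complex set \<Rightarrow> complex \<Rightarrow> complex \<Rightarrow> real" where
  "star_dist c P x y =
     (if \<exists>p\<in>P. x \<in> closed_segment c p \<and> y \<in> closed_segment c p then dist x y
      else dist x c + dist c y)"

definition star_nbhd :: "complex \<Rightarrow> complex set \<Rightarrow> complex \<Rightarrow> real \<Rightarrow> complex set" where
  "star_nbhd c P a w = {x \<in> star_set c P. star_dist c P x a \<le> w}"

definition is_nbhd_subtree :: "complex \<Rightarrow> complex set \<Rightarrow> complex set \<Rightarrow> bool" where
  "is_nbhd_subtree c P S \<longleftrightarrow>
     (\<exists>a w. a \<in> star_set c P \<and> w \<in> \<rat> \<and> 0 \<le> w \<and> S = star_nbhd c P a w)"

definition star_nes_model ::
  "'v set \<Rightarrow> ('v \<Rightarrow> 'v \<Rightarrow> bool) \<Rightarrow> complex \<Rightarrow> complex set \<Rightarrow> ('v \<Rightarrow> complex set) \<Rightarrow> bool" where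
  "star_nes_model V E c P T \<longleftrightarrow> is_star c P \<and>
     (\<forall>v\<in>V. is_nbhd_subtree c P (T v)) \<and>
     (\<forall>u\<in>V. \<forall>v\<in>V. u \<noteq> v \<longrightarrow> (E u v \<longleftrightarrow> T u \<inter> T v \<noteq> {}))"

end

theory Submission
  imports Defs
begin

(*
  The vertices whose subtree contains the centre c always form a clique K. If K is not maximal,
  some vertex outside K has a subtree meeting all subtrees of K; a subtree avoiding c is an interval
  on a single leg at positive distance from c. Choose such a vertex u whose interval comes closest
  to c and replace T u by a neighbourhood subtree covering its leg from c up to the far end of T u
  and reaching into the other legs less far than any subtree avoiding c. The new subtree meets
  exactly the old neighbours of u: a subtree met only by the new part lies on the leg of u between c
  and T u; since a subtree through c contains, along each leg, everything closer to c than any of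
  its points, it then meets every subtree of K and is closer to c than T u, contradicting the choice
  of u. Each replacement adds u to K, so after finitely many steps K is maximal.
*)

lemma dist_on_closed_segment:
  fixes c p x y :: "'a::real_normed_vector"
  assumes "x \<in> closed_segment c p" "y \<in> closed_segment c p"
  shows "dist x y = \<bar>dist x c - dist y c\<bar>"
proof -
  obtain a where a: "0 \<le> a" "x - c = a *\<^sub>R (p - c)"
    using assms(1) by (auto simp: in_segment algebra_simps)
  obtain b where b: "0 \<le> b" "y - c = b *\<^sub>R (p - c)"
    using assms(2) by (auto simp: in_segment algebra_simps)
  have "x - y = (a - b) *\<^sub>R (p - c)"
    by (metis a(2) b(2) diff_diff_eq2 diff_add_cancel scaleR_diff_left)
  then have "dist x y = \<bar>a - b\<bar> * norm (p - c)"
    by (simp add: dist_norm)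
  moreover have "dist x c = a * norm (p - c)" "dist y c = b * norm (p - c)"
    using a b by (simp_all add: dist_norm)
  ultimately show ?thesis
    by (simp add: abs_mult left_diff_distrib[symmetric])
qed

lemma closed_segment_point_at_dist:
  fixes c p :: "'a::real_normed_vector"
  assumes "0 \<le> t" "t \<le> dist p c"
  obtains a where "a \<in> closed_segment c p" "dist a c = t"
proof
  define s where "s = t / dist p c"
  have s: "0 \<le> s" "s \<le> 1"
    using assms by (auto simp: s_def divide_le_eq_1)
  show "c + s *\<^sub>R (p - c) \<in> closed_segment c p"
    using s by (auto simp: in_segment algebra_simps intro!: exI[of _ s])
  show "dist (c + s *\<^sub>R (p - c)) c = t"
    using assms by (cases "p = c") (auto simp: s_def dist_norm norm_minus_commute)
qed

lemma star_leg_unique: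
  assumes "is_star c P" "p \<in> P" "q \<in> P"
    and "x \<in> closed_segment c p" "x \<in> closed_segment c q" "x \<noteq> c"
  shows "p = q"
  using assms unfolding is_star_def by blast

lemma star_setE:
  assumes "x \<in> star_set c P"
  obtains p where "p \<in> P" "x \<in> closed_segment c p"
  using assms unfolding star_set_def by blast

lemma star_dist_legs:
  assumes st: "is_star c P" and "p \<in> P" "q \<in> P"
    and x: "x \<in> closed_segment c p" and y: "y \<in> closed_segment c q"
  shows "star_dist c P x y = (if p = q then \<bar>dist x c - dist y c\<bar> else dist x c + dist y c)"
proof (cases "\<exists>r\<in>P. x \<in> closed_segment c r \<and> y \<in> closed_segment c r")
  case True
  then obtain r where r: "r \<in> P" "x \<in> closed_segment c r" "y \<in> closed_segment c r"
    by blast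
  have "star_dist c P x y = dist x y"
    using True by (simp add: star_dist_def)
  moreover have "p = q \<Longrightarrow> dist x y = \<bar>dist x c - dist y c\<bar>"
    using dist_on_closed_segment x y by blast
  moreover have "p \<noteq> q \<Longrightarrow> x = c \<or> y = c"
    using star_leg_unique[OF st] r x y \<open>p \<in> P\<close> \<open>q \<in> P\<close> by metis
  ultimately show ?thesis
    by (auto simp: dist_commute)
next
  case False
  then have "p \<noteq> q"
    using \<open>q \<in> P\<close> x y by blast
  with False show ?thesis
    unfolding star_dist_def by (auto simp: dist_commute)
qed

lemma mem_star_nbhd_iff:
  assumes "is_star c P" "p \<in> P" "q \<in> P"
    and "a \<in> closed_segment c p" "z \<in> closed_segment c q"
  shows "z \<in> star_nbhd c P a w \<longleftrightarrow>
    (if q = p then \<bar>dist z c - dist a c\<bar> else dist z c + dist a c) \<le> w"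
proof -
  have "z \<in> star_set c P"
    using assms(3,5) unfolding star_set_def by blast
  then show ?thesis
    using star_dist_legs[OF assms(1,3,2,5,4)] by (simp add: star_nbhd_def)
qed

lemma is_nbhd_subtreeE:
  assumes "is_nbhd_subtree c P S"
  obtains p a w where "p \<in> P" "a \<in> closed_segment c p" "0 \<le> w" "S = star_nbhd c P a w"
  using assms unfolding is_nbhd_subtree_def by (metis star_setE)

lemma infdist_leg_interval:
  fixes c p :: "'a::real_normed_vector"
  assumes "0 \<le> l" "l \<le> r" "l \<le> dist p c"
  shows "infdist c {z \<in> closed_segment c p. l \<le> dist z c \<and> dist z c \<le> r} = l"
    (is "infdist c ?I = l")
proof -
  obtain a where a: "a \<in> closed_segment c p" "dist a c = l"
    using closed_segment_point_at_dist assms(1,3) by blast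
  then have "a \<in> ?I"
    using assms(2) by simp
  then have "infdist c ?I \<le> l"
    using infdist_le[of a ?I c] a(2) by (simp add: dist_commute)
  moreover have "l \<le> infdist c ?I"
  proof -
    have "?I \<noteq> {}"
      using \<open>a \<in> ?I\<close> by blast
    then show ?thesis
      unfolding infdist_notempty[OF \<open>?I \<noteq> {}\<close>] by (rule cINF_greatest) (simp add: dist_commute)
  qed
  ultimately show ?thesis
    by simp
qed

lemma nbhd_subtree_avoiding_center:
  assumes st: "is_star c P" and "is_nbhd_subtree c P S" "c \<notin> S"
  obtains p l r where "p \<in> P" "0 < l" "l \<le> r" "l = infdist c S"
    "S = {z \<in> closed_segment c p. l \<le> dist z c \<and> dist z c \<le> r}"
proof -
  obtain p a w where p: "p \<in> P" "a \<in> closed_segment c p" "0 \<le> w"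
    and S: "S = star_nbhd c P a w"
    using assms(2) by (rule is_nbhd_subtreeE)
  have "w < dist a c"
    using mem_star_nbhd_iff[OF st p(1) p(1) p(2), of c w] \<open>c \<notin> S\<close> S by auto
  have "z \<in> S \<longleftrightarrow> z \<in> closed_segment c p \<and> dist a c - w \<le> dist z c \<and> dist z c \<le> dist a c + w"
    for z
  proof
    assume "z \<in> S"
    then obtain q where q: "q \<in> P" "z \<in> closed_segment c q"
      using S unfolding star_nbhd_def by (blast elim: star_setE)
    then have "(if q = p then \<bar>dist z c - dist a c\<bar> else dist z c + dist a c) \<le> w"
      using mem_star_nbhd_iff[OF st p(1) q(1) p(2) q(2)] \<open>z \<in> S\<close> S by blast
    with \<open>w < dist a c\<close> have "q = p" "\<bar>dist z c - dist a c\<bar> \<le> w"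
      by (smt (verit) zero_le_dist)+
    then show "z \<in> closed_segment c p \<and> dist a c - w \<le> dist z c \<and> dist z c \<le> dist a c + w"
      using q by auto
  next
    assume "z \<in> closed_segment c p \<and> dist a c - w \<le> dist z c \<and> dist z c \<le> dist a c + w"
    then show "z \<in> S"
      using mem_star_nbhd_iff[OF st p(1) p(1) p(2)] S by auto
  qed
  then have S_eq: "S = {z \<in> closed_segment c p. dist a c - w \<le> dist z c \<and> dist z c \<le> dist a c + w}"
    by blast
  have "dist a c \<le> dist p c"
    using dist_in_closed_segment[OF p(2)] by (simp add: dist_commute)
  then have "dist a c - w = infdist c S"
    unfolding S_eq using \<open>w < dist a c\<close> \<open>0 \<le> w\<close> by (intro infdist_leg_interval[symmetric]) auto
  from that[OF p(1) _ _ this S_eq] show thesis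
    using \<open>w < dist a c\<close> \<open>0 \<le> w\<close> by linarith
qed

lemma nbhd_subtree_through_center_closer:
  assumes st: "is_star c P" and "is_nbhd_subtree c P S" "c \<in> S"
    and q: "q \<in> P" "x \<in> closed_segment c q" "y \<in> closed_segment c q"
    and "y \<in> S" "dist x c \<le> dist y c"
  shows "x \<in> S"
proof -
  obtain p a w where p: "p \<in> P" "a \<in> closed_segment c p"
    and S: "S = star_nbhd c P a w"
    using assms(2) by (rule is_nbhd_subtreeE)
  have "dist a c \<le> w"
    using mem_star_nbhd_iff[OF st p(1) p(1) p(2), of c w] \<open>c \<in> S\<close> S by auto
  moreover have "(if q = p then \<bar>dist y c - dist a c\<bar> else dist y c + dist a c) \<le> w"
    using mem_star_nbhd_iff[OF st p(1) q(1) p(2) q(3)] \<open>y \<in> S\<close> S by blast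
  ultimately have "(if q = p then \<bar>dist x c - dist a c\<bar> else dist x c + dist a c) \<le> w"
    using \<open>dist x c \<le> dist y c\<close> by (smt (verit) zero_le_dist)
  then show ?thesis
    using mem_star_nbhd_iff[OF st p(1) q(1) p(2) q(2)] S by blast
qed

lemma nbhd_subtree_leg_prefix:
  assumes st: "is_star c P" and p: "p \<in> P" and "0 < R" "0 < \<epsilon>"
  obtains S where "is_nbhd_subtree c P S"
    "\<And>z. z \<in> closed_segment c p \<Longrightarrow> z \<in> S \<longleftrightarrow> dist z c \<le> R"
    "\<And>z. z \<in> S \<Longrightarrow> z \<in> closed_segment c p \<or> dist z c < \<epsilon>"
proof -
  \<comment> \<open>Centre at distance R0 - w on leg p, rational radius w just above R0 / 2: the ball reaches
    R0 along p but only 2 w - R0 < \<epsilon> into the other legs.\<close>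
  define R0 where "R0 = min R (dist p c)"
  have "0 < R0"
    using st p \<open>0 < R\<close> by (auto simp: R0_def is_star_def)
  define m where "m = min \<epsilon> R0 / 2"
  have "0 < m"
    using \<open>0 < R0\<close> \<open>0 < \<epsilon>\<close> by (simp add: m_def)
  then obtain w where w: "w \<in> \<rat>" "R0 / 2 < w" "w < R0 / 2 + m"
    using Rats_dense_in_real[of "R0 / 2" "R0 / 2 + m"] by auto
  define t where "t = R0 - w"
  have t: "0 < t" "t \<le> dist p c" "w - t < \<epsilon>"
    using w unfolding t_def m_def R0_def by linarith+
  obtain a where a: "a \<in> closed_segment c p" "dist a c = t"
    using closed_segment_point_at_dist[of t p c] t by auto
  show thesis
  proof
    show "is_nbhd_subtree c P (star_nbhd c P a w)"
      unfolding is_nbhd_subtree_def star_set_def using a(1) p w \<open>0 < R0\<close> by force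
  next
    fix z assume z: "z \<in> closed_segment c p"
    have "dist z c \<le> dist p c"
      using dist_in_closed_segment[OF z] by (simp add: dist_commute)
    have "z \<in> star_nbhd c P a w \<longleftrightarrow> \<bar>dist z c - t\<bar> \<le> w"
      using mem_star_nbhd_iff[OF st p p a(1) z] a(2) by simp
    also have "\<dots> \<longleftrightarrow> dist z c \<le> R0"
      using w zero_le_dist[of z c] unfolding t_def abs_le_iff by linarith
    also have "\<dots> \<longleftrightarrow> dist z c \<le> R"
      using \<open>dist z c \<le> dist p c\<close> by (auto simp: R0_def)
    finally show "z \<in> star_nbhd c P a w \<longleftrightarrow> dist z c \<le> R" .
  next
    fix z assume z: "z \<in> star_nbhd c P a w"
    then obtain q where q: "q \<in> P" "z \<in> closed_segment c q"
      unfolding star_nbhd_def by (blast elim: star_setE)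
    show "z \<in> closed_segment c p \<or> dist z c < \<epsilon>"
      using mem_star_nbhd_iff[OF st p q(1) a(1) q(2)] z q a(2) t by (auto split: if_splits)
  qed
qed

lemma leg_interval_meeting_prefix:
  assumes Tu: "Tu = {z \<in> closed_segment c q. l \<le> dist z c \<and> dist z c \<le> r}"
    and S_leg: "\<And>z. z \<in> closed_segment c q \<Longrightarrow> z \<in> S \<longleftrightarrow> dist z c \<le> r"
    and S_off: "\<And>z. z \<in> S \<Longrightarrow> z \<in> closed_segment c q \<or> dist z c < \<epsilon>"
    and Tv: "Tv = {z \<in> closed_segment c q'. l' \<le> dist z c \<and> dist z c \<le> r'}" "\<epsilon> \<le> l'"
    and "S \<inter> Tv \<noteq> {}"
  shows "Tu \<inter> Tv \<noteq> {} \<or> (\<exists>x\<in>Tv. x \<in> closed_segment c q \<and> dist x c < l)"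
proof -
  obtain x where x: "x \<in> S" "x \<in> Tv"
    using \<open>S \<inter> Tv \<noteq> {}\<close> by blast
  then have "x \<in> closed_segment c q"
    using S_off Tv by force
  moreover have "dist x c \<le> r"
    using S_leg x(1) calculation by blast
  ultimately show ?thesis
    using x(2) Tu by (cases "l \<le> dist x c") auto
qed

lemma not_maximal_clique_extend:
  assumes "is_clique V E K" "\<not> is_maximal_clique V E K"
  obtains v where "v \<in> V" "v \<notin> K" "\<And>k. k \<in> K \<Longrightarrow> E v k"
proof -
  obtain K' where K': "is_clique V E K'" "K \<subseteq> K'" "K' \<noteq> K"
    using assms unfolding is_maximal_clique_def by auto
  then obtain v where v: "v \<in> K'" "v \<notin> K"
    by blast
  have "v \<in> V"
    using K'(1) v(1) unfolding is_clique_def by blast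
  moreover have "E v k" if "k \<in> K" for k
    using K' v that unfolding is_clique_def by (metis subsetD)
  ultimately show thesis
    using that v(2) by blast
qed

lemma star_nes_modelD:
  assumes "star_nes_model V E c P T"
  shows "is_star c P"
    and "v \<in> V \<Longrightarrow> is_nbhd_subtree c P (T v)"
    and "u \<in> V \<Longrightarrow> v \<in> V \<Longrightarrow> u \<noteq> v \<Longrightarrow> E u v \<longleftrightarrow> T u \<inter> T v \<noteq> {}"
  using assms unfolding star_nes_model_def by blast+

lemma star_nes_model_center_clique:
  assumes "star_nes_model V E c P T"
  shows "is_clique V E {v \<in> V. c \<in> T v}"
  using star_nes_modelD(3)[OF assms] unfolding is_clique_def by blast

lemma star_nes_model_fun_upd:
  assumes model: "star_nes_model V E c P T" and S: "is_nbhd_subtree c P S"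
    and meets: "\<And>v. v \<in> V \<Longrightarrow> v \<noteq> u \<Longrightarrow> S \<inter> T v \<noteq> {} \<longleftrightarrow> T u \<inter> T v \<noteq> {}"
  shows "star_nes_model V E c P (T(u := S))"
  unfolding star_nes_model_def
proof (intro conjI ballI impI)
  show "is_star c P"
    by (rule star_nes_modelD(1)[OF model])
next
  fix v assume "v \<in> V"
  then show "is_nbhd_subtree c P ((T(u := S)) v)"
    using star_nes_modelD(2)[OF model] S by simp
next
  fix v v' assume "v \<in> V" "v' \<in> V" "v \<noteq> v'"
  moreover have "E v v' \<longleftrightarrow> T v \<inter> T v' \<noteq> {}"
    using star_nes_modelD(3)[OF model] calculation by blast
  ultimately show "E v v' \<longleftrightarrow> (T(u := S)) v \<inter> (T(u := S)) v' \<noteq> {}"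
    using meets[of v] meets[of v'] by (auto simp: Int_commute)
qed

lemma star_nes_model_center_clique_not_maximalE:
  assumes model: "star_nes_model V E c P T"
    and "\<not> is_maximal_clique V E {v \<in> V. c \<in> T v}"
  obtains v where "v \<in> V" "c \<notin> T v" "\<And>k. k \<in> V \<Longrightarrow> c \<in> T k \<Longrightarrow> T v \<inter> T k \<noteq> {}"
proof -
  obtain v where v: "v \<in> V" "v \<notin> {v \<in> V. c \<in> T v}" "\<And>k. k \<in> {v \<in> V. c \<in> T v} \<Longrightarrow> E v k"
    using not_maximal_clique_extend[OF star_nes_model_center_clique[OF model] assms(2)] by blast
  then have "T v \<inter> T k \<noteq> {}" if "k \<in> V" "c \<in> T k" for k
    using star_nes_modelD(3)[OF model v(1) that(1)] that by auto
  with v show thesis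
    using that by blast
qed

lemma star_nes_model_center_gap:
  assumes "finite V" and model: "star_nes_model V E c P T"
  obtains \<delta> where "0 < \<delta>" "\<And>v. v \<in> V \<Longrightarrow> c \<notin> T v \<Longrightarrow> \<delta> \<le> infdist c (T v)"
proof -
  define N where "N = {v \<in> V. c \<notin> T v}"
  have gap_pos: "0 < infdist c (T v)" if "v \<in> N" for v
    using nbhd_subtree_avoiding_center[OF star_nes_modelD(1,2)[OF model]] that
    unfolding N_def by (metis (no_types, lifting) mem_Collect_eq)
  show thesis
  proof (cases "N = {}")
    case True
    then show thesis
      using that[of 1] unfolding N_def by auto
  next
    case False
    have "finite N"
      using assms(1) by (simp add: N_def)
    then have "0 < Min ((\<lambda>v. infdist c (T v)) ` N)"
      using False gap_pos by (subst Min_gr_iff) auto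
    moreover have "Min ((\<lambda>v. infdist c (T v)) ` N) \<le> infdist c (T v)" if "v \<in> N" for v
      using \<open>finite N\<close> that by (intro Min_le) auto
    ultimately show thesis
      using that unfolding N_def by blast
  qed
qed

lemma star_nes_model_extend_closest_candidate:
  assumes "finite V" and model: "star_nes_model V E c P T"
    and u: "u \<in> V" "c \<notin> T u" and u_meets: "\<And>k. k \<in> V \<Longrightarrow> c \<in> T k \<Longrightarrow> T u \<inter> T k \<noteq> {}"
    and closest: "\<And>v. v \<in> V \<Longrightarrow> c \<notin> T v \<Longrightarrow> (\<And>k. k \<in> V \<Longrightarrow> c \<in> T k \<Longrightarrow> T v \<inter> T k \<noteq> {})
      \<Longrightarrow> infdist c (T u) \<le> infdist c (T v)"
  obtains S where "c \<in> S" "star_nes_model V E c P (T(u := S))"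
proof -
  note st = star_nes_modelD(1)[OF model] and nbhd = star_nes_modelD(2)[OF model]
  obtain p l r where p: "p \<in> P" "0 < l" "l \<le> r" "l = infdist c (T u)"
    and Tu: "T u = {z \<in> closed_segment c p. l \<le> dist z c \<and> dist z c \<le> r}"
    by (rule nbhd_subtree_avoiding_center[OF st nbhd[OF u(1)] u(2)])
  obtain \<delta> where "0 < \<delta>" and \<delta>: "\<And>v. v \<in> V \<Longrightarrow> c \<notin> T v \<Longrightarrow> \<delta> \<le> infdist c (T v)"
    using star_nes_model_center_gap[OF assms(1) model] by blast
  obtain S where S: "is_nbhd_subtree c P S"
    and S_leg: "\<And>z. z \<in> closed_segment c p \<Longrightarrow> z \<in> S \<longleftrightarrow> dist z c \<le> r"
    and S_off: "\<And>z. z \<in> S \<Longrightarrow> z \<in> closed_segment c p \<or> dist z c < \<delta>"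
    using nbhd_subtree_leg_prefix[OF st p(1), of r \<delta>] p(2,3) \<open>0 < \<delta>\<close> by auto
  have meets: "S \<inter> T v \<noteq> {} \<longleftrightarrow> T u \<inter> T v \<noteq> {}" if "v \<in> V" "v \<noteq> u" for v
  proof
    show "T u \<inter> T v \<noteq> {} \<Longrightarrow> S \<inter> T v \<noteq> {}"
      using Tu S_leg by blast
  next
    assume meets_S: "S \<inter> T v \<noteq> {}"
    show "T u \<inter> T v \<noteq> {}"
    proof (cases "c \<in> T v")
      case True
      then show ?thesis
        using u_meets \<open>v \<in> V\<close> by blast
    next
      case False
      obtain q l' r' where "q \<in> P" "0 < l'" "l' \<le> r'" "l' = infdist c (T v)"
        and Tv: "T v = {z \<in> closed_segment c q. l' \<le> dist z c \<and> dist z c \<le> r'}"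
        by (rule nbhd_subtree_avoiding_center[OF st nbhd[OF \<open>v \<in> V\<close>] False])
      moreover have "\<delta> \<le> l'"
        using \<delta> \<open>v \<in> V\<close> False calculation(4) by blast
      ultimately consider "T u \<inter> T v \<noteq> {}"
        | x where "x \<in> T v" "x \<in> closed_segment c p" "dist x c < l"
        using leg_interval_meeting_prefix[OF Tu S_leg S_off Tv _ meets_S] by blast
      then show ?thesis
      proof cases
        case (2 x)
        \<comment> \<open>x lies between c and T u, so v would be a candidate closer to c than u.\<close>
        have "T v \<inter> T k \<noteq> {}" if k: "k \<in> V" "c \<in> T k" for k
        proof -
          obtain y where y: "y \<in> T u" "y \<in> T k"
            using u_meets k by blast
          have y_leg: "y \<in> closed_segment c p" "l \<le> dist y c"
            using y(1) unfolding Tu by blast+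
          then have "dist x c \<le> dist y c"
            using 2(3) by linarith
          then have "x \<in> T k"
            by (rule nbhd_subtree_through_center_closer[OF st nbhd[OF k(1)] k(2) p(1) 2(2) y_leg(1) y(2)])
          then show ?thesis
            using 2(1) by blast
        qed
        then have "l \<le> l'"
          using closest[OF \<open>v \<in> V\<close> False] p(4) \<open>l' = infdist c (T v)\<close> by simp
        moreover have "l' \<le> dist x c"
          using 2(1) Tv by blast
        ultimately show ?thesis
          using 2(3) by simp
      qed
    qed
  qed
  have "c \<in> S"
    using S_leg[of c] p(2,3) by simp
  with star_nes_model_fun_upd[OF model S meets] show thesis
    using that by blast
qed

lemma star_nes_model_absorb_into_center:
  assumes "finite V" and model: "star_nes_model V E c P T"
    and not_max: "\<not> is_maximal_clique V E {v \<in> V. c \<in> T v}"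
  obtains u S where "u \<in> V" "c \<notin> T u" "c \<in> S" "star_nes_model V E c P (T(u := S))"
proof -
  define U where "U = {v \<in> V. c \<notin> T v \<and> (\<forall>k\<in>V. c \<in> T k \<longrightarrow> T v \<inter> T k \<noteq> {})}"
  obtain v0 where "v0 \<in> V" "c \<notin> T v0" "\<And>k. k \<in> V \<Longrightarrow> c \<in> T k \<Longrightarrow> T v0 \<inter> T k \<noteq> {}"
    using star_nes_model_center_clique_not_maximalE[OF model not_max] by blast
  then have "v0 \<in> U"
    unfolding U_def by blast
  then have "finite U" "U \<noteq> {}"
    using assms(1) unfolding U_def by auto
  define u where "u = arg_min_on (\<lambda>v. infdist c (T v)) U"
  have "u \<in> U"
    unfolding u_def using \<open>finite U\<close> \<open>U \<noteq> {}\<close> by (rule arg_min_if_finite(1))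
  have closest: "infdist c (T u) \<le> infdist c (T v)" if "v \<in> U" for v
    unfolding u_def using \<open>finite U\<close> \<open>U \<noteq> {}\<close> that by (rule arg_min_least)
  from \<open>u \<in> U\<close> have u: "u \<in> V" "c \<notin> T u" "\<And>k. k \<in> V \<Longrightarrow> c \<in> T k \<Longrightarrow> T u \<inter> T k \<noteq> {}"
    unfolding U_def by auto
  obtain S where "c \<in> S" "star_nes_model V E c P (T(u := S))"
  proof (rule star_nes_model_extend_closest_candidate[OF assms(1) model u])
    show "infdist c (T u) \<le> infdist c (T v)"
      if "v \<in> V" "c \<notin> T v" "\<And>k. k \<in> V \<Longrightarrow> c \<in> T k \<Longrightarrow> T v \<inter> T k \<noteq> {}" for v
      using closest that unfolding U_def by blast
  qed
  with u show thesis
    using that by blast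
qed

lemma star_nes_model_center_maximal_clique:
  assumes "finite V" and "star_nes_model V E c P T"
  shows "\<exists>T'. star_nes_model V E c P T' \<and> is_maximal_clique V E {v \<in> V. c \<in> T' v}"
  using assms(2)
proof (induction "card {v \<in> V. c \<notin> T v}" arbitrary: T rule: less_induct)
  case (less T)
  show ?case
  proof (cases "is_maximal_clique V E {v \<in> V. c \<in> T v}")
    case True
    with less.prems show ?thesis
      by blast
  next
    case False
    obtain u S where u: "u \<in> V" "c \<notin> T u" "c \<in> S" and model: "star_nes_model V E c P (T(u := S))"
      using star_nes_model_absorb_into_center[OF assms(1) less.prems False] by blast
    have "{v \<in> V. c \<notin> (T(u := S)) v} = {v \<in> V. c \<notin> T v} - {u}"
      using u by auto
    moreover have "card ({v \<in> V. c \<notin> T v} - {u}) < card {v \<in> V. c \<notin> T v}"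
      using assms(1) u by (intro card_Diff1_less) auto
    ultimately have "card {v \<in> V. c \<notin> (T(u := S)) v} < card {v \<in> V. c \<notin> T v}"
      by simp
    from this model show ?thesis
      by (rule less.hyps)
  qed
qed

theorem claim1:
  fixes V :: "'v set" and E :: "'v \<Rightarrow> 'v \<Rightarrow> bool"
  assumes "simple_graph V E"
    and "\<exists>c P T. star_nes_model V E c P T"
  shows "\<exists>c P T. star_nes_model V E c P T \<and> is_maximal_clique V E {v \<in> V. c \<in> T v}"
proof -
  obtain c P T where "star_nes_model V E c P T"
    using assms(2) by blast
  moreover have "finite V"
    using assms(1) by (simp add: simple_graph_def)
  ultimately show ?thesis
    using star_nes_model_center_maximal_clique by blast
qed

end
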